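(* Let $\mathcal P_m$ be the $1$-dimensional PVAS with states $\{\perp,0,1,\dots,m\}$, stack alphabet $\{\gamma_0,\dots,\gamma_m\}$ and transitions $(\perp,0,\mathrm{pop}(\gamma_0),0)$, $(0,+1,\mathrm{nop},\perp)$, and for each $i\in\{1,\dots,m\}$: $(\perp,0,\mathrm{pop}(\gamma_i),i)$, $(i,+1,\mathrm{push}(\gamma_{i-1}),\perp)$, $(i,-1,\mathrm{push}(\gamma_{i-1}),i)$. Define for $c\in\mathbb N$ and $w=\gamma_{i_1}\cdots\gamma_{i_k}$ the number $\theta(c,w)=A_{i_1}\circ\cdots\circ A_{i_k}(c)$ (so $\theta(c,\varepsilon)=c$). Then for all $c,c'\in\mathbb N$ and $w,w'\in\{\gamma_0,\dots,\gamma_m\}^*$, if $(\perp,c,w)\xrightarrow{*}(\perp,c',w')$ then $\theta(c,w)\ge\theta(c',w')\ge c'+|w'|$. Consequently, from any configuration of $\mathcal P_m$ only finitely many configurations are reachable.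
   Context: Ackermann functions $A_j:\mathbb N\to\mathbb N$: $A_0(n)=n+1$, $A_j(n)=A_{j-1}^{n+1}(1)$ for $j>0$. For a $1$-dimensional PVAS with transitions in $Q\times\mathbb Z\times\mathrm{Op}(\Gamma)\times Q$, configurations are $(q,c,w)\in Q\times\mathbb N\times\Gamma^*$, and $(p,c,u)\to(q,d,v)$ iff some transition $(p,a,\mathrm{op},q)$ has $d=c+a\ge0$ and either $\mathrm{op}=\mathrm{push}(\gamma)$, $v=u\gamma$; or $\mathrm{op}=\mathrm{pop}(\gamma)$, $u=v\gamma$; or $\mathrm{op}=\mathrm{nop}$, $u=v$. $\xrightarrow{*}$ is the reflexive transitive closure; $|w'|$ is the length of $w'$. *)

theory Defs
  imports Main
begin

fun Ack :: "nat \<Rightarrow> nat \<Rightarrow> nat" where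
  "Ack 0 n = Suc n"
| "Ack (Suc j) n = ((Ack j) ^^ (Suc n)) 1"

datatype 'g stack_op = Push 'g | Pop 'g | Nop

text \<open>One step of a 1-dimensional PVAS with transition set T.
  Configurations are (state, counter, stack); the stack top is the last letter
  (push(gamma) turns u into u @ [gamma]).\<close>
definition pvas_step ::
  "('q \<times> int \<times> 'g stack_op \<times> 'q) set \<Rightarrow> ('q \<times> nat \<times> 'g list) \<Rightarrow> ('q \<times> nat \<times> 'g list) \<Rightarrow> bool" where
  "pvas_step T cfg cfg' \<longleftrightarrow>
     (case cfg of (p, c, u) \<Rightarrow> case cfg' of (q, d, v) \<Rightarrow>
       (\<exists>a op. (p, a, op, q) \<in> T \<and> int d = int c + a \<and>
          (case op of Push \<gamma> \<Rightarrow> v = u @ [\<gamma>]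
                    | Pop \<gamma> \<Rightarrow> u = v @ [\<gamma>]
                    | Nop \<Rightarrow> u = v)))"

abbreviation pvas_reach ::
  "('q \<times> int \<times> 'g stack_op \<times> 'q) set \<Rightarrow> ('q \<times> nat \<times> 'g list) \<Rightarrow> ('q \<times> nat \<times> 'g list) \<Rightarrow> bool" where
  "pvas_reach T \<equiv> (pvas_step T)\<^sup>*\<^sup>*"

text \<open>States of P_m: Bot (\<bottom>) and St i for i \<in> {0..m}; stack letter gamma_i is the natural number i.\<close>
datatype pstate = Bot | St nat

definition Pm_states :: "nat \<Rightarrow> pstate set" where
  "Pm_states m = insert Bot (St ` {0..m})"

definition Pm :: "nat \<Rightarrow> (pstate \<times> int \<times> nat stack_op \<times> pstate) set" where
  "Pm m = {(Bot, 0, Pop 0, St 0), (St 0, 1, Nop, Bot)}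
     \<union> (\<Union>i\<in>{1..m}. {(Bot, 0, Pop i, St i),
                     (St i, 1, Push (i - 1), Bot),
                     (St i, -1, Push (i - 1), St i)})"

fun theta :: "nat \<Rightarrow> nat list \<Rightarrow> nat" where
  "theta c [] = c"
| "theta c (i # w) = Ack i (theta c w)"

end

theory Submission
  imports Defs
begin

text \<open>The quantity \<open>\<theta>\<close> extends to a potential on all configurations of \<open>P\<^sub>m\<close>:
  in state \<open>i\<close> the counter \<open>c\<close> is weighted as \<open>A\<^sub>i c\<close>. Transitions never increase
  the potential: popping \<open>\<gamma>\<^sub>i\<close> and entering state \<open>i\<close> preserves it, the loop in state \<open>i\<close>
  preserves it by \<open>A\<^sub>i (c + 1) = A\<^sub>i\<^sub>-\<^sub>1 (A\<^sub>i c)\<close>, and leaving state \<open>i\<close> decreases it by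
  \<open>A\<^sub>i\<^sub>-\<^sub>1 (c + 1) \<le> A\<^sub>i c\<close>. Since \<open>A\<^sub>j n > n\<close>, the potential dominates \<open>c + |w|\<close>, so
  it bounds counter and stack height of every reachable configuration.\<close>

lemma Ack_Suc_0: "Ack (Suc j) 0 = Ack j 1"
  by simp

lemma Ack_Suc_Suc: "Ack (Suc j) (Suc n) = Ack j (Ack (Suc j) n)"
  by simp

declare Ack.simps(2) [simp del]

lemma less_Ack: "n < Ack j n"
proof (induction j arbitrary: n)
  case 0
  then show ?case by simp
next
  case (Suc j)
  note less_Ack_j = Suc.IH
  show ?case
  proof (induction n)
    case 0
    then show ?case using less_Ack_j[of 1] by (simp add: Ack_Suc_0)
  next
    case (Suc n)
    then show ?case using less_Ack_j[of "Ack (Suc j) n"] by (simp add: Ack_Suc_Suc)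
  qed
qed

lemma Ack_less_Ack_Suc: "Ack j n < Ack j (Suc n)"
proof (cases j)
  case 0
  then show ?thesis by simp
next
  case (Suc k)
  then show ?thesis using less_Ack[of "Ack (Suc k) n" k] by (simp add: Ack_Suc_Suc)
qed

lemma Ack_mono: "n \<le> n' \<Longrightarrow> Ack j n \<le> Ack j n'"
  by (induction n' rule: dec_induct) (auto intro: order_trans less_imp_le Ack_less_Ack_Suc)

lemma Ack_Suc_le_Ack_Suc_left: "Ack j (Suc n) \<le> Ack (Suc j) n"
proof (induction n)
  case 0
  then show ?case by (simp add: Ack_Suc_0)
next
  case (Suc n)
  have "Suc (Suc n) \<le> Ack (Suc j) n" using Suc less_Ack[of "Suc n" j] by linarith
  then show ?case by (simp add: Ack_Suc_Suc Ack_mono)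
qed

lemma theta_append: "theta c (u @ v) = theta (theta c v) u"
  by (induction u) auto

lemma theta_mono: "c \<le> c' \<Longrightarrow> theta c w \<le> theta c' w"
  by (induction w) (auto intro: Ack_mono)

lemma add_length_le_theta: "c + length w \<le> theta c w"
proof (induction w)
  case (Cons i w)
  then show ?case using less_Ack[of "theta c w" i] by simp
qed simp

fun Pm_potential :: "pstate \<times> nat \<times> nat list \<Rightarrow> nat" where
  "Pm_potential (Bot, c, w) = theta c w"
| "Pm_potential (St i, c, w) = theta (Ack i c) w"

lemma add_length_le_Pm_potential: "c + length w \<le> Pm_potential (q, c, w)"
proof (cases q)
  case Bot
  then show ?thesis using add_length_le_theta[of c w] by simp
next
  case (St i)
  have "c + length w \<le> Ack i c + length w" using less_Ack[of c i] by simp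
  also have "\<dots> \<le> theta (Ack i c) w" by (rule add_length_le_theta)
  finally show ?thesis using St by simp
qed

lemma Pm_transitionE:
  assumes "(p, a, op, q) \<in> Pm m"
  obtains "p = Bot" "a = 0" "op = Pop 0" "q = St 0"
    | "p = St 0" "a = 1" "op = Nop" "q = Bot"
    | i where "i \<in> {1..m}" "p = Bot" "a = 0" "op = Pop i" "q = St i"
    | k where "Suc k \<in> {1..m}" "p = St (Suc k)" "a = 1" "op = Push k" "q = Bot"
    | k where "Suc k \<in> {1..m}" "p = St (Suc k)" "a = -1" "op = Push k" "q = St (Suc k)"
proof -
  have "\<exists>k. i = Suc k" if "i \<in> {1..m}" for i
    using that by (cases i) auto
  then show ?thesis using assms that unfolding Pm_def by fastforce
qed

lemma Pm_step_invariants: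
  assumes "pvas_step (Pm m) (p, c, u) (q, d, v)"
  shows "Pm_potential (q, d, v) \<le> Pm_potential (p, c, u) \<and> q \<in> Pm_states m
    \<and> set v \<subseteq> set u \<union> {0..m}"
proof -
  from assms obtain a op where t: "(p, a, op, q) \<in> Pm m" and cnt: "int d = int c + a"
    and st: "case op of Push \<gamma> \<Rightarrow> v = u @ [\<gamma>] | Pop \<gamma> \<Rightarrow> u = v @ [\<gamma>] | Nop \<Rightarrow> u = v"
    unfolding pvas_step_def by auto
  from t show ?thesis
  proof (cases rule: Pm_transitionE)
    case 2
    then have "d = Suc c" using cnt by simp
    then show ?thesis using 2 st by (simp add: Pm_states_def)
  next
    case (4 k)
    then have "d = Suc c" using cnt by simp
    with 4 have "Pm_potential (q, d, v) = theta (Ack k (Suc c)) u"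
      using st by (simp add: theta_append)
    also have "\<dots> \<le> theta (Ack (Suc k) c) u"
      by (rule theta_mono[OF Ack_Suc_le_Ack_Suc_left])
    finally show ?thesis using 4 st by (auto simp: Pm_states_def)
  next
    case (5 k)
    then have "c = Suc d" using cnt by simp
    then show ?thesis using 5 st by (auto simp: theta_append Ack_Suc_Suc Pm_states_def)
  qed (use cnt st in \<open>auto simp: theta_append Pm_states_def\<close>)
qed

lemma Pm_reach_invariants:
  assumes "pvas_reach (Pm m) (p, c, u) (q, d, v)"
  shows "Pm_potential (q, d, v) \<le> Pm_potential (p, c, u) \<and> q \<in> insert p (Pm_states m)
    \<and> set v \<subseteq> set u \<union> {0..m}"
  using assms
proof (induction "(q, d, v)" arbitrary: q d v rule: rtranclp_induct)
  case base
  then show ?case by simp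
next
  case (step y)
  obtain q' d' v' where "y = (q', d', v')" by (cases y)
  then show ?case using step Pm_step_invariants[of m q' d' v' q d v] by fastforce
qed

lemma finite_bounded_configs:
  assumes "finite Q" "finite G"
  shows "finite {(q, c, w). q \<in> Q \<and> set w \<subseteq> G \<and> c + length w \<le> B}"
proof (rule finite_subset)
  show "finite (Q \<times> {..B} \<times> {w. set w \<subseteq> G \<and> length w \<le> B})"
    using assms finite_lists_length_le[of G B] by auto
qed auto

theorem mainTheorem5:
  fixes m :: nat
  shows "(\<forall>c c' w w'. set w \<subseteq> {0..m} \<longrightarrow> set w' \<subseteq> {0..m} \<longrightarrow>
            pvas_reach (Pm m) (Bot, c, w) (Bot, c', w') \<longrightarrow>
            theta c w \<ge> theta c' w' \<and> theta c' w' \<ge> c' + length w')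
       \<and> (\<forall>q c w. q \<in> Pm_states m \<longrightarrow> set w \<subseteq> {0..m} \<longrightarrow>
            finite {cfg. pvas_reach (Pm m) (q, c, w) cfg})"
proof (intro conjI allI impI)
  fix c c' w w'
  assume "pvas_reach (Pm m) (Bot, c, w) (Bot, c', w')"
  from Pm_reach_invariants[OF this] show "theta c' w' \<le> theta c w" by simp
  show "c' + length w' \<le> theta c' w'" by (rule add_length_le_theta)
next
  fix q c w
  assume "q \<in> Pm_states m" "set w \<subseteq> {0..m}"
  have "{cfg. pvas_reach (Pm m) (q, c, w) cfg} \<subseteq> {(q', d, v). q' \<in> Pm_states m
      \<and> set v \<subseteq> {0..m} \<and> d + length v \<le> Pm_potential (q, c, w)}"
  proof clarify
    fix q' d v
    assume "pvas_reach (Pm m) (q, c, w) (q', d, v)"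
    with \<open>q \<in> Pm_states m\<close> \<open>set w \<subseteq> {0..m}\<close> show "q' \<in> Pm_states m \<and> set v \<subseteq> {0..m}
        \<and> d + length v \<le> Pm_potential (q, c, w)"
      using Pm_reach_invariants add_length_le_Pm_potential[of d v q'] by fastforce
  qed
  moreover have "finite (Pm_states m)" by (simp add: Pm_states_def)
  ultimately show "finite {cfg. pvas_reach (Pm m) (q, c, w) cfg}"
    using finite_bounded_configs[of "Pm_states m" "{0..m}"] finite_subset by blast
qed

end
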